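(* Let $F=\frac19\begin{pmatrix}1&1&1\\1&1&1\\1&1&1\end{pmatrix}$ (box blur filter). Then the equation $F*X=B$ with the reflexive boundary condition, for unknown $X\in\mathbb{R}^{m\times n}$, has a unique solution for every $B\in\mathbb{R}^{m\times n}$ if and only if $m,n\notin\{3l: l\in\mathbb{N}\}$.
   Context: $\mathbb{N}=\{1,2,3,\dots\}$. For $F=[f_{ij}]\in\mathbb{R}^{3\times3}$ and $X=[x_{ij}]\in\mathbb{R}^{m\times n}$, the convolution $F*X\in\mathbb{R}^{m\times n}$ is defined by $[F*X]_{ij}=\sum_{l_1=1}^3\sum_{l_2=1}^3 f_{l_1l_2}\,x_{i-l_1+2,\,j-l_2+2}$ for $1\le i\le m$, $1\le j\le n$, where the reflexive boundary condition sets $x_{0j}=x_{1j}$, $x_{m+1,j}=x_{mj}$, $x_{i0}=x_{i1}$, $x_{i,n+1}=x_{in}$ (for all indices $i\in\{0,\dots,m+1\}$, $j\in\{0,\dots,n+1\}$, so corners are also determined, e.g. $x_{00}=x_{11}$). *)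

theory Defs
  imports "HOL-Analysis.Analysis"
begin

text \<open>An m x n real matrix is represented as a function nat => nat => real with
  1-based indices, vanishing outside {1..m} x {1..n}.\<close>
definition matrices :: "nat \<Rightarrow> nat \<Rightarrow> (nat \<Rightarrow> nat \<Rightarrow> real) set" where
  "matrices m n = {X. \<forall>i j. (i \<notin> {1..m} \<or> j \<notin> {1..n}) \<longrightarrow> X i j = 0}"

text \<open>Reflexive boundary condition: index 0 maps to 1, index m+1 maps to m.
  Indices are taken as integers (i - l1 + 2 may be 0).\<close>
definition refl_idx :: "nat \<Rightarrow> int \<Rightarrow> nat" where
  "refl_idx m i = (if i < 1 then 1 else if i > int m then m else nat i)"

definition refl_ext :: "nat \<Rightarrow> nat \<Rightarrow> (nat \<Rightarrow> nat \<Rightarrow> real) \<Rightarrow> int \<Rightarrow> int \<Rightarrow> real" where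
  "refl_ext m n X i j = X (refl_idx m i) (refl_idx n j)"

definition conv_refl :: "(nat \<Rightarrow> nat \<Rightarrow> real) \<Rightarrow> nat \<Rightarrow> nat \<Rightarrow> (nat \<Rightarrow> nat \<Rightarrow> real) \<Rightarrow> (nat \<Rightarrow> nat \<Rightarrow> real)" where
  "conv_refl F m n X = (\<lambda>i j. if i \<in> {1..m} \<and> j \<in> {1..n} then
      (\<Sum>l1\<in>{1..3::nat}. \<Sum>l2\<in>{1..3::nat}.
         F l1 l2 * refl_ext m n X (int i - int l1 + 2) (int j - int l2 + 2))
    else 0)"

definition box_blur :: "nat \<Rightarrow> nat \<Rightarrow> real" where
  "box_blur l1 l2 = (if l1 \<in> {1..3} \<and> l2 \<in> {1..3} then 1/9 else 0)"

end

theory Submission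
  imports Defs
begin

text \<open>The box blur is separable: up to the factor 1/9 it is the one-dimensional reflexive
  three-point sum x(i-1) + x(i) + x(i+1) applied along both indices, so it is bijective iff both
  one-dimensional operators are. In one dimension, rows 1, ..., m-1 of the system determine a
  solution from its first entry by a forward recurrence, and the homogeneous recurrence has the
  3-periodic solution 1, -2, 1, 1, -2, 1, ...; this sequence satisfies the last row exactly when
  3 divides m. So for 3 | m it spans a kernel; otherwise the operator is injective, and surjective
  because the last row can be fixed by adding a suitable multiple of it to a forward solution.\<close>

definition refl_sum3 :: "nat \<Rightarrow> (nat \<Rightarrow> real) \<Rightarrow> nat \<Rightarrow> real" where
  "refl_sum3 m x i = (\<Sum>l\<in>{1..3::nat}. x (refl_idx m (int i - int l + 2)))"

lemma refl_sum3_eq: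
  assumes "1 \<le> i" "i \<le> m"
  shows "refl_sum3 m x i =
    x (if i = 1 then 1 else i - 1) + x i + x (if i = m then m else i + 1)"
proof -
  have "{1..3::nat} = {1, 2, 3}" by auto
  moreover have "refl_idx m (int i - 1 + 2) = (if i = m then m else i + 1)"
    and "refl_idx m (int i - 2 + 2) = i"
    and "refl_idx m (int i - 3 + 2) = (if i = 1 then 1 else i - 1)"
    using assms by (auto simp: refl_idx_def nat_diff_distrib)
  ultimately show ?thesis
    unfolding refl_sum3_def by (simp add: algebra_simps)
qed

lemma refl_sum3_cong:
  assumes "\<forall>k\<in>{1..m}. x k = y k" "i \<in> {1..m}"
  shows "refl_sum3 m x i = refl_sum3 m y i"
proof -
  have "i - 1 \<in> {1..m}" if "i \<noteq> 1" using assms that by auto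
  moreover have "i + 1 \<in> {1..m}" if "i \<noteq> m" using assms that by auto
  ultimately show ?thesis using assms by (auto simp: refl_sum3_eq)
qed

lemma refl_sum3_add: "refl_sum3 m (\<lambda>k. x k + y k) i = refl_sum3 m x i + refl_sum3 m y i"
  unfolding refl_sum3_def by (rule sum.distrib)

lemma refl_sum3_diff: "refl_sum3 m (\<lambda>k. x k - y k) i = refl_sum3 m x i - refl_sum3 m y i"
  unfolding refl_sum3_def by (rule sum_subtractf)

lemma refl_sum3_scale: "refl_sum3 m (\<lambda>k. c * x k) i = c * refl_sum3 m x i"
  unfolding refl_sum3_def by (simp add: sum_distrib_left)

lemma refl_sum3_forward_unique:
  assumes rows: "\<forall>i. 1 \<le> i \<and> i < m \<longrightarrow> refl_sum3 m x i = refl_sum3 m y i"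
    and first: "x 1 = y 1"
  shows "1 \<le> k \<Longrightarrow> k \<le> m \<Longrightarrow> x k = y k"
proof (induction k rule: less_induct)
  case (less k)
  have "k = 1 \<or> k = 2 \<or> k = Suc (Suc (Suc (k - 3)))" using less.prems by arith
  then consider "k = 1" | "k = 2" | k' where "k = Suc (Suc (Suc k'))" by blast
  then show ?case
  proof cases
    case 1
    then show ?thesis using first by simp
  next
    case 2
    then show ?thesis using rows[rule_format, of 1] first less.prems
      by (simp add: refl_sum3_eq numeral_2_eq_2)
  next
    case 3
    have "x (Suc k') = y (Suc k')" "x (Suc (Suc k')) = y (Suc (Suc k'))"
      using less.IH less.prems 3 by auto
    then show ?thesis using rows[rule_format, of "k' + 2"] less.prems 3
      by (simp add: refl_sum3_eq)
  qed
qed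

fun forward_sol :: "(nat \<Rightarrow> real) \<Rightarrow> nat \<Rightarrow> real" where
  "forward_sol b 0 = 0"
| "forward_sol b (Suc 0) = 0"
| "forward_sol b (Suc (Suc 0)) = b 1"
| "forward_sol b (Suc (Suc (Suc k))) =
     b (k + 2) - forward_sol b (Suc k) - forward_sol b (Suc (Suc k))"

lemma refl_sum3_forward_sol:
  assumes "1 \<le> i" "i < m"
  shows "refl_sum3 m (forward_sol b) i = b i"
proof (cases "i = 1")
  case True
  then show ?thesis using assms by (simp add: refl_sum3_eq numeral_2_eq_2)
next
  case False
  then obtain k where "i = k + 2" using assms by (intro that[of "i - 2"]) arith
  then show ?thesis using assms by (simp add: refl_sum3_eq)
qed

definition ker3 :: "nat \<Rightarrow> real" where
  "ker3 k = (if k mod 3 = 2 then -2 else 1)"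

lemma ker3_consecutive_sum: "ker3 k + ker3 (k + 1) + ker3 (k + 2) = 0"
  by (auto simp: ker3_def mod_Suc)

lemma refl_sum3_ker3_interior:
  assumes "1 \<le> i" "i < m"
  shows "refl_sum3 m ker3 i = 0"
proof (cases "i = 1")
  case False
  then have "refl_sum3 m ker3 i = ker3 (i - 1) + ker3 (i - 1 + 1) + ker3 (i - 1 + 2)"
    using assms by (simp add: refl_sum3_eq)
  then show ?thesis by (simp only: ker3_consecutive_sum)
next
  case True
  then have "refl_sum3 m ker3 i = ker3 1 + ker3 1 + ker3 2"
    using assms by (simp add: refl_sum3_eq numeral_2_eq_2)
  then show ?thesis by (simp add: ker3_def)
qed

lemma refl_sum3_ker3_last:
  assumes "1 \<le> m"
  shows "refl_sum3 m ker3 m = 0 \<longleftrightarrow> 3 dvd m"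
proof (cases "m = 1")
  case False
  then obtain p where "m = p + 2" using assms by (intro that[of "m - 2"]) arith
  then show ?thesis
    by (auto simp: refl_sum3_eq ker3_def mod_Suc dvd_eq_mod_eq_0 split: if_splits)
qed (simp add: refl_sum3_eq ker3_def)

lemma refl_sum3_ker3:
  assumes "3 dvd m" "i \<in> {1..m}"
  shows "refl_sum3 m ker3 i = 0"
  using assms refl_sum3_ker3_interior[of i m] refl_sum3_ker3_last[of m]
  by (cases "i = m") auto

lemma refl_sum3_injective:
  assumes "\<not> 3 dvd m" "\<forall>i\<in>{1..m}. refl_sum3 m x i = refl_sum3 m y i" "k \<in> {1..m}"
  shows "x k = y k"
proof -
  define z where "z = (\<lambda>k. x k - y k)"
  have z0: "refl_sum3 m z i = 0" if "i \<in> {1..m}" for i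
    using assms(2) that by (simp add: z_def refl_sum3_diff)
  have z_ker: "z k = z 1 * ker3 k" if "k \<in> {1..m}" for k
  proof (rule refl_sum3_forward_unique[of m z "\<lambda>k. z 1 * ker3 k"])
    show "\<forall>i. 1 \<le> i \<and> i < m \<longrightarrow> refl_sum3 m z i = refl_sum3 m (\<lambda>k. z 1 * ker3 k) i"
      by (simp add: z0 refl_sum3_scale refl_sum3_ker3_interior)
  qed (use that in \<open>auto simp: ker3_def\<close>)
  have "m \<in> {1..m}" using assms(3) by simp
  then have "0 = refl_sum3 m z m"
    using z0 by simp
  also have "\<dots> = refl_sum3 m (\<lambda>k. z 1 * ker3 k) m"
    using z_ker \<open>m \<in> {1..m}\<close> by (intro refl_sum3_cong) blast+
  also have "\<dots> = z 1 * refl_sum3 m ker3 m"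
    by (rule refl_sum3_scale)
  finally have "z 1 = 0"
    using refl_sum3_ker3_last[of m] assms by auto
  then show ?thesis using z_ker[OF assms(3)] by (simp add: z_def)
qed

lemma refl_sum3_surjective:
  assumes "\<not> 3 dvd m"
  shows "\<exists>x. \<forall>i\<in>{1..m}. refl_sum3 m x i = b i"
proof (cases "m = 0")
  case False
  define d where "d = refl_sum3 m ker3 m"
  define t where "t = (b m - refl_sum3 m (forward_sol b) m) / d"
  have "d \<noteq> 0" using refl_sum3_ker3_last[of m] assms False by (simp add: d_def)
  have "refl_sum3 m (\<lambda>k. forward_sol b k + t * ker3 k) i = b i" if "i \<in> {1..m}" for i
  proof (cases "i = m")
    case True
    have "refl_sum3 m (\<lambda>k. forward_sol b k + t * ker3 k) m
        = refl_sum3 m (forward_sol b) m + t * d"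
      by (simp add: refl_sum3_add refl_sum3_scale d_def)
    also have "\<dots> = b m"
      using \<open>d \<noteq> 0\<close> by (simp add: t_def)
    finally show ?thesis using True by simp
  next
    case False
    then show ?thesis using that
      by (simp add: refl_sum3_add refl_sum3_scale refl_sum3_forward_sol refl_sum3_ker3_interior)
  qed
  then show ?thesis by blast
qed simp

lemma refl_idx_mem: "1 \<le> m \<Longrightarrow> refl_idx m i \<in> {1..m}"
  by (auto simp: refl_idx_def)

definition box_restrict :: "nat \<Rightarrow> nat \<Rightarrow> (nat \<Rightarrow> nat \<Rightarrow> real) \<Rightarrow> nat \<Rightarrow> nat \<Rightarrow> real" where
  "box_restrict m n X = (\<lambda>i j. if i \<in> {1..m} \<and> j \<in> {1..n} then X i j else 0)"

lemma box_restrict_mem_matrices: "box_restrict m n X \<in> matrices m n"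
  by (simp add: box_restrict_def matrices_def)

lemma conv_refl_box_restrict: "conv_refl F m n (box_restrict m n X) = conv_refl F m n X"
  unfolding conv_refl_def refl_ext_def box_restrict_def
  using refl_idx_mem[of m] refl_idx_mem[of n] by (intro ext) auto

lemma conv_box_blur_separable:
  assumes "i \<in> {1..m}" "j \<in> {1..n}"
  shows "conv_refl box_blur m n X i j = refl_sum3 m (\<lambda>i'. refl_sum3 n (X i') j) i / 9"
proof -
  have "{1..3::nat} = {1, 2, 3}" by auto
  then show ?thesis
    using assms unfolding conv_refl_def refl_sum3_def refl_ext_def box_blur_def
    by (simp add: algebra_simps)
qed

lemma conv_box_blur_rank_one:
  assumes "i \<in> {1..m}" "j \<in> {1..n}"
  shows "conv_refl box_blur m n (\<lambda>i j. u i * v j) i j = refl_sum3 m u i * refl_sum3 n v j / 9"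
  using assms
  by (simp add: conv_box_blur_separable refl_sum3_scale mult.commute[of _ "refl_sum3 n v j"])

lemma conv_box_blur_injective:
  assumes "\<not> 3 dvd m" "\<not> 3 dvd n" "X \<in> matrices m n" "Y \<in> matrices m n"
    and same_image: "conv_refl box_blur m n X = conv_refl box_blur m n Y"
  shows "X = Y"
proof -
  have rows: "refl_sum3 n (X i) j = refl_sum3 n (Y i) j" if "i \<in> {1..m}" "j \<in> {1..n}" for i j
  proof (rule refl_sum3_injective[OF assms(1) _ that(1)], intro ballI)
    fix i' assume "i' \<in> {1..m}"
    then show "refl_sum3 m (\<lambda>i. refl_sum3 n (X i) j) i' = refl_sum3 m (\<lambda>i. refl_sum3 n (Y i) j) i'"
      using fun_cong[OF fun_cong[OF same_image, of i'], of j] that(2)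
      by (simp add: conv_box_blur_separable)
  qed
  have "X i j = Y i j" for i j
  proof (cases "i \<in> {1..m} \<and> j \<in> {1..n}")
    case True
    then show ?thesis using refl_sum3_injective[OF assms(2)] rows by blast
  next
    case False
    then show ?thesis using assms(3,4) by (simp add: matrices_def)
  qed
  then show ?thesis by blast
qed

lemma conv_box_blur_surjective:
  assumes "\<not> 3 dvd m" "\<not> 3 dvd n" "B \<in> matrices m n"
  shows "\<exists>X \<in> matrices m n. conv_refl box_blur m n X = B"
proof -
  have "\<exists>Y. \<forall>j. \<forall>i\<in>{1..m}. refl_sum3 m (Y j) i = 9 * B i j"
    by (intro choice allI refl_sum3_surjective[OF assms(1)])
  then obtain Y where Y: "\<forall>j. \<forall>i\<in>{1..m}. refl_sum3 m (Y j) i = 9 * B i j"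
    by blast
  have "\<exists>X. \<forall>i. \<forall>j\<in>{1..n}. refl_sum3 n (X i) j = Y j i"
    by (intro choice allI refl_sum3_surjective[OF assms(2)])
  then obtain X where X: "\<forall>i. \<forall>j\<in>{1..n}. refl_sum3 n (X i) j = Y j i"
    by blast
  have "conv_refl box_blur m n X i j = B i j" for i j
  proof (cases "i \<in> {1..m} \<and> j \<in> {1..n}")
    case True
    then have "(\<lambda>i'. refl_sum3 n (X i') j) = Y j" using X by auto
    then show ?thesis using True Y by (simp add: conv_box_blur_separable)
  next
    case False
    then show ?thesis using assms(3) by (auto simp: conv_refl_def matrices_def)
  qed
  then have "conv_refl box_blur m n X = B" by (intro ext)
  then show ?thesis
    by (intro bexI[of _ "box_restrict m n X"])
       (simp_all add: conv_refl_box_restrict box_restrict_mem_matrices)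
qed

lemma conv_box_blur_kernel:
  assumes "1 \<le> m" "1 \<le> n" "3 dvd m \<or> 3 dvd n"
  shows "\<exists>K \<in> matrices m n. K \<noteq> (\<lambda>i j. 0) \<and> conv_refl box_blur m n K = (\<lambda>i j. 0)"
proof -
  obtain u v where "u 1 = 1" "v 1 = 1"
    and uv: "\<And>i j. i \<in> {1..m} \<Longrightarrow> j \<in> {1..n} \<Longrightarrow> refl_sum3 m u i * refl_sum3 n v j = 0"
  proof (cases "3 dvd m")
    case True
    then show ?thesis
      using that[of ker3 "\<lambda>_. 1"] refl_sum3_ker3 by (simp add: ker3_def)
  next
    case False
    then show ?thesis
      using that[of "\<lambda>_. 1" ker3] refl_sum3_ker3 assms(3) by (simp add: ker3_def)
  qed
  define K where "K = box_restrict m n (\<lambda>i j. u i * v j)"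
  have "K 1 1 \<noteq> 0"
    using assms \<open>u 1 = 1\<close> \<open>v 1 = 1\<close> by (simp add: K_def box_restrict_def)
  moreover have "conv_refl box_blur m n K i j = 0" for i j
  proof (cases "i \<in> {1..m} \<and> j \<in> {1..n}")
    case True
    then show ?thesis
      using uv[of i j] conv_box_blur_rank_one[of i m j n u v]
      by (auto simp: K_def conv_refl_box_restrict)
  qed (auto simp: conv_refl_def)
  ultimately show ?thesis
    by (intro bexI[of _ K]) (auto simp: K_def box_restrict_mem_matrices)
qed

lemma positive_multiple_of_3_iff:
  "1 \<le> (k::nat) \<Longrightarrow> k \<in> {3 * l | l. l \<ge> 1} \<longleftrightarrow> 3 dvd k"
  by auto

theorem corollary3:
  fixes m n :: nat
  assumes "m \<ge> 1" and "n \<ge> 1"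
  shows "(\<forall>B \<in> matrices m n. \<exists>!X. X \<in> matrices m n \<and> conv_refl box_blur m n X = B)
         \<longleftrightarrow> (m \<notin> {3 * l | l. l \<ge> 1} \<and> n \<notin> {3 * l | l. l \<ge> 1})"
proof -
  have "(\<forall>B \<in> matrices m n. \<exists>!X. X \<in> matrices m n \<and> conv_refl box_blur m n X = B)
         \<longleftrightarrow> \<not> (3 dvd m \<or> 3 dvd n)"
  proof
    assume unique: "\<forall>B \<in> matrices m n. \<exists>!X. X \<in> matrices m n \<and> conv_refl box_blur m n X = B"
    show "\<not> (3 dvd m \<or> 3 dvd n)"
    proof
      assume "3 dvd m \<or> 3 dvd n"
      then obtain K where "K \<in> matrices m n" "K \<noteq> (\<lambda>i j. 0)" "conv_refl box_blur m n K = (\<lambda>i j. 0)"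
        using conv_box_blur_kernel assms by blast
      moreover have "(\<lambda>i j. 0) \<in> matrices m n" "conv_refl box_blur m n (\<lambda>i j. 0) = (\<lambda>i j. 0)"
        by (auto simp: matrices_def conv_refl_def refl_ext_def fun_eq_iff)
      ultimately show False using unique by metis
    qed
  next
    assume "\<not> (3 dvd m \<or> 3 dvd n)"
    then show "\<forall>B \<in> matrices m n. \<exists>!X. X \<in> matrices m n \<and> conv_refl box_blur m n X = B"
      using conv_box_blur_surjective conv_box_blur_injective by metis
  qed
  then show ?thesis using positive_multiple_of_3_iff assms by simp
qed

end
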